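(* Let $\lambda>1/2$. There exists a probability measure $\nu_\lambda$ supported on $[-2,2]$ such that for all real $z>2$ $$\int_{\mathbb{R}}\frac{\nu_\lambda(dx)}{z-x}=\frac{G(z)^{1-1/(2\lambda)}}{(z-2)^{1/(2\lambda)}},$$ and $\nu_\lambda$ is absolutely continuous with density proportional to $$\sin\!\Big[\Big(1-\frac1{2\lambda}\Big)\Big(\arcsin\frac x2+\frac\pi2\Big)\Big]\,(2-x)^{-1/(2\lambda)}\,\mathbf 1_{(-2,2)}(x).$$
   Context: $G(z)=\frac{z-\sqrt{z^2-4}}{2}$ is the Cauchy–Stieltjes transform of the standard Wigner law on $[-2,2]$ (positive for real $z>2$). *)

theory Defs
  imports "HOL-Probability.Probability"
begin

text \<open>Cauchy--Stieltjes transform of the standard Wigner (semicircle) law, for real z > 2.\<close>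
definition wignerG :: "real \<Rightarrow> real" where
  "wignerG z = (z - sqrt (z^2 - 4)) / 2"

definition nu_dens :: "real \<Rightarrow> real \<Rightarrow> real" where
  "nu_dens lam x =
     (if x \<in> {-2<..<2}
      then sin ((1 - 1 / (2 * lam)) * (arcsin (x / 2) + pi / 2)) * (2 - x) powr (- 1 / (2 * lam))
      else 0)"

end

theory Submission
  imports Defs
begin

text \<open>
  Put a = 1/(2 lam), so 0 < a < 1, and substitute x = -2 cos t, t in (0,pi).
  Then 2 - x = 2 + 2 cos t and arcsin (x/2) + pi/2 = t, so the density becomes
  nu_dens lam (-2 cos t) = sin ((1-a) t) (2 + 2 cos t)^(-a) = Im (e^(it) (1 + e^(it))^(-2a)),
  the boundary value of the function Psi a r t = Im (zeta (1+zeta)^(-2a)) at zeta = r e^(it).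
  Inside the disc the binomial series gives the sine expansion
  Psi a r t = sum_n ((-2a) gchoose n) r^(n+1) sin ((n+1) t), so by orthogonality the k-th sine
  coefficient is ((-2a) gchoose (k-1)) r^k pi/2; dominated convergence (r -> 1, with majorant
  k (1 + cos t)^(-a) sin t) transfers this to r = 1.  With w = G(z) one has z = w + 1/w, and the
  Cauchy kernel dx/(z-x) becomes the Poisson-type kernel
  2 w sin t / (1 + 2 w cos t + w^2) = sum_(k>=1) -2 (-w)^k sin (k t); integrating term by term and summing
  the binomial series gives pi w (1-w)^(-2a) = pi G(z)^(1-a) / (z-2)^a.  The case k = 1 gives the
  total mass pi, hence the normalising constant 1/pi.
\<close>

lemma sums_integral_dominated:
  fixes f :: "nat \<Rightarrow> 'a \<Rightarrow> 'b::{banach, second_countable_topology}"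
  assumes int: "\<And>n. integrable M (f n)" and dom: "integrable M D" and coeff: "summable c"
    and bound: "\<And>n x. norm (f n x) \<le> c n * D x"
    and lim: "\<And>x. (\<lambda>n. f n x) sums F x"
  shows "integrable M F" and "(\<lambda>n. integral\<^sup>L M (f n)) sums integral\<^sup>L M F"
proof -
  have F: "F = (\<lambda>x. \<Sum>n. f n x)"
    using lim by (simp add: fun_eq_iff sums_iff)
  have pointwise: "AE x in M. summable (\<lambda>n. norm (f n x))"
    by (intro AE_I2 summable_comparison_test[OF _ summable_mult2[OF coeff]]) (use bound in auto)
  have "norm (\<integral>x. norm (f n x) \<partial>M) \<le> c n * integral\<^sup>L M D" for n
  proof -
    have "norm (\<integral>x. norm (f n x) \<partial>M) = (\<integral>x. norm (f n x) \<partial>M)"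
      by (simp add: integral_nonneg_AE)
    also have "\<dots> \<le> (\<integral>x. c n * D x \<partial>M)"
      by (intro integral_mono integrable_norm int integrable_mult_right dom bound)
    finally show ?thesis by simp
  qed
  then have total: "summable (\<lambda>n. \<integral>x. norm (f n x) \<partial>M)"
    by (intro summable_comparison_test[OF _ summable_mult2[OF coeff]]) auto
  show "integrable M F"
    unfolding F by (rule integrable_suminf[OF int pointwise total])
  show "(\<lambda>n. integral\<^sup>L M (f n)) sums integral\<^sup>L M F"
    unfolding F by (rule sums_integral[OF int pointwise total])
qed

lemma set_integrable_0_pi:
  fixes f :: "real \<Rightarrow> real"
  assumes "continuous_on {0..pi} f"
  shows "set_integrable lborel {0<..<pi} f"
  by (rule set_integrable_subset[OF borel_integrable_atLeastAtMost'[OF assms]]) auto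

lemma integral_cos_int_mult:
  fixes n :: int
  shows "(LINT t:{0<..<pi}|lborel. cos (of_int n * t)) = (if n = 0 then pi else 0)"
proof -
  define F where "F (t::real) = (if n = 0 then t else sin (of_int n * t) / of_int n)" for t
  have "(LBINT t=ereal 0..ereal pi. cos (of_int n * t)) = F pi - F 0"
  proof (rule interval_integral_FTC_finite)
    show "continuous_on {min 0 pi..max 0 pi} (\<lambda>t. cos (of_int n * t))"
      by (intro continuous_intros)
    show "(F has_vector_derivative cos (of_int n * t)) (at t within {min 0 pi..max 0 pi})" for t
      unfolding F_def has_real_derivative_iff_has_vector_derivative[symmetric]
      by (cases "n = 0") (auto intro!: derivative_eq_intros)
  qed
  also have "F pi - F 0 = (if n = 0 then pi else 0)"
    by (simp add: F_def mult.commute)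
  finally show ?thesis
    unfolding interval_lebesgue_integral_def einterval_eq_Icc by simp
qed

lemma integral_sin_mult_sin:
  assumes "m \<ge> 1" "k \<ge> 1"
  shows "(LINT t:{0<..<pi}|lborel. sin (real m * t) * sin (real k * t)) = (if m = k then pi/2 else 0)"
proof -
  define d s where "d = int m - int k" and "s = int m + int k"
  have prod: "sin (real m * t) * sin (real k * t) = cos (of_int d * t) / 2 - cos (of_int s * t) / 2" for t
    by (simp add: d_def s_def cos_diff cos_add left_diff_distrib distrib_right) (simp add: field_simps)
  have "(LINT t:{0<..<pi}|lborel. sin (real m * t) * sin (real k * t))
      = (LINT t:{0<..<pi}|lborel. cos (of_int d * t)) / 2 - (LINT t:{0<..<pi}|lborel. cos (of_int s * t)) / 2"
    unfolding prod
    by (subst set_integral_diff) (auto intro!: set_integrable_0_pi continuous_intros set_integral_divide_zero)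
  also have "\<dots> = (if m = k then pi/2 else 0)"
  proof -
    have "d = 0 \<longleftrightarrow> m = k" "s \<noteq> 0"
      using assms by (auto simp: d_def s_def)
    then show ?thesis by (simp add: integral_cos_int_mult)
  qed
  finally show ?thesis .
qed

lemma abs_sin_nat_mult_le:
  assumes "0 \<le> t" "t \<le> pi"
  shows "\<bar>sin (real k * t)\<bar> \<le> real k * sin t"
proof (induction k)
  case 0 then show ?case by simp
next
  case (Suc k)
  have st: "0 \<le> sin t" using assms by (simp add: sin_ge_zero)
  have "sin (real (Suc k) * t) = sin (real k * t) * cos t + cos (real k * t) * sin t"
    by (simp add: distrib_right sin_add)
  also have "\<bar>\<dots>\<bar> \<le> \<bar>sin (real k * t)\<bar> * \<bar>cos t\<bar> + \<bar>cos (real k * t)\<bar> * sin t"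
    using st by (simp add: abs_mult abs_triangle_ineq[THEN order_trans])
  also have "\<dots> \<le> \<bar>sin (real k * t)\<bar> + sin t"
    by (intro add_mono mult_left_le mult_left_le_one_le) (auto simp: st)
  also have "\<dots> \<le> real (Suc k) * sin t" using Suc by (simp add: distrib_right)
  finally show ?case .
qed

lemma summable_abs_gbinomial_power:
  fixes a r :: real
  assumes "0 \<le> r" "r < 1"
  shows "summable (\<lambda>n. \<bar>a gchoose n\<bar> * r^n)"
proof -
  have "summable (\<lambda>n. (a gchoose n) * ((1+r)/2)^n)"
    using gen_binomial_real[of "(1+r)/2" a] assms by (auto simp: sums_iff)
  from powser_insidea[OF this, of r] assms have "summable (\<lambda>n. \<bar>(a gchoose n) * r^n\<bar>)"
    by simp
  then show ?thesis using assms by (simp add: abs_mult)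
qed

text \<open>Im (zeta (1 + zeta)^(-2a)) at zeta = r e^(it); at r = 1 it is the density in the angle variable.\<close>
definition Psi :: "real \<Rightarrow> real \<Rightarrow> real \<Rightarrow> real" where
  "Psi a r t = Im (of_real r * cis t * (1 + of_real r * cis t) powr of_real (-2*a))"

lemma Psi_sums:
  assumes "0 \<le> r" "r < 1"
  shows "(\<lambda>n. ((-2*a) gchoose n) * r^Suc n * sin (real (Suc n) * t)) sums Psi a r t"
proof -
  define z where "z = complex_of_real r * cis t"
  have "norm z < 1" using assms by (simp add: z_def norm_mult)
  from sums_mult[OF gen_binomial_complex[OF this, of "of_real (-2*a)"], of z]
  have "(\<lambda>n. Im (z * ((of_real (-2*a) gchoose n) * z^n))) sums Psi a r t"
    unfolding Psi_def z_def by (rule sums_Im)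
  moreover have "Im (z * ((of_real (-2*a) gchoose n) * z^n))
      = ((-2*a) gchoose n) * r^Suc n * sin (real (Suc n) * t)" for n
  proof -
    have "(of_real (-2*a) gchoose n) = (of_real ((-2*a) gchoose n) :: complex)"
      by (simp add: gbinomial_prod_rev)
    moreover have "z * z^n = of_real (r^Suc n) * cis (real (Suc n) * t)"
    proof -
      have "z * z^n = of_real (r^Suc n) * cis t ^ Suc n"
        unfolding z_def power_Suc[symmetric] by (simp only: power_mult_distrib of_real_power)
      then show ?thesis by (simp only: Complex.DeMoivre)
    qed
    ultimately have "z * ((of_real (-2*a) gchoose n) * z^n)
        = of_real (((-2*a) gchoose n) * r^Suc n) * cis (real (Suc n) * t)"
      by (simp add: mult_ac)
    then show ?thesis by simp
  qed
  ultimately show ?thesis by simp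
qed

text \<open>Sine coefficients of Psi for r < 1, by termwise integration and orthogonality.\<close>
lemma Psi_sine_coefficient:
  assumes "0 \<le> r" "r < 1" "k \<ge> 1"
  shows "(LINT t:{0<..<pi}|lborel. Psi a r t * sin (real k * t)) = ((-2*a) gchoose (k-1)) * r^k * pi/2"
proof -
  define S where "S = {0<..<pi::real}"
  define b where "b n = ((-2*a) gchoose n) * r^Suc n" for n
  define f where "f n t = indicator S t * (b n * (sin (real (Suc n) * t) * sin (real k * t)))" for n t
  have int: "integrable lborel (f n)" for n
  proof -
    have "set_integrable lborel S (\<lambda>t. b n * (sin (real (Suc n) * t) * sin (real k * t)))"
      unfolding S_def by (intro set_integrable_0_pi continuous_intros)
    then show ?thesis by (simp add: f_def[abs_def] set_integrable_def)
  qed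
  have "(\<lambda>n. \<bar>b n\<bar>) = (\<lambda>n. r * (\<bar>(-2*a) gchoose n\<bar> * r^n))"
    using assms by (simp add: fun_eq_iff b_def abs_mult mult_ac)
  then have coeff: "summable (\<lambda>n. \<bar>b n\<bar>)"
    using summable_mult[OF summable_abs_gbinomial_power[OF assms(1,2), where a="-2*a"]] by simp
  have bound: "norm (f n t) \<le> \<bar>b n\<bar> * indicator S t" for n t
    by (auto simp: f_def indicator_def abs_mult intro!: mult_left_le mult_le_one)
  have lim: "(\<lambda>n. f n t) sums (indicator S t * (Psi a r t * sin (real k * t)))" for t
    unfolding f_def b_def
    using sums_mult[OF sums_mult2[OF Psi_sums[OF assms(1,2), of a t], of "sin (real k * t)"], of "indicator S t"]
    by (simp add: mult_ac)
  have "(\<lambda>n. integral\<^sup>L lborel (f n)) sums (LINT t:S|lborel. Psi a r t * sin (real k * t))"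
    using sums_integral_dominated(2)[OF int _ coeff bound lim] unfolding set_lebesgue_integral_def
    by (simp add: S_def)
  moreover have "integral\<^sup>L lborel (f n) = (if n = k - 1 then b n * pi/2 else 0)" for n
  proof -
    have "integral\<^sup>L lborel (f n) = b n * (LINT t:S|lborel. sin (real (Suc n) * t) * sin (real k * t))"
      unfolding f_def set_lebesgue_integral_def by (simp add: mult_ac)
    then show ?thesis using assms integral_sin_mult_sin[of "Suc n" k] by (auto simp: S_def)
  qed
  ultimately have "(\<lambda>n. if n = k - 1 then b n * pi/2 else 0) sums (LINT t:S|lborel. Psi a r t * sin (real k * t))"
    by simp
  then show ?thesis
    using sums_single[of "k - 1" "\<lambda>n. b n * pi/2"] assms by (simp add: S_def b_def sums_iff)
qed

text \<open>Uniform bound on Psi for 1/2 <= r <= 1, using |1 + r e^(it)|^2 >= 1 + cos t.\<close>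
lemma Psi_bound:
  assumes "0 \<le> a" "1/2 \<le> r" "r \<le> 1" "0 < t" "t < pi"
  shows "\<bar>Psi a r t\<bar> \<le> (1 + cos t) powr (-a)"
proof -
  define u where "u = 1 + complex_of_real r * cis t"
  have c: "-1 < cos t"
    using cos_monotone_0_pi[of t pi] assms by simp
  have "(cmod u)^2 = (1 + r * cos t)^2 + (r * sin t)^2"
    unfolding u_def by (simp add: cmod_power2)
  also have "\<dots> = 1 + 2*r*cos t + r^2"
    by (simp add: power_mult_distrib sin_squared_eq) (simp add: power2_eq_square algebra_simps)
  finally have nu: "(cmod u)^2 = 1 + 2*r*cos t + r^2" .
  have "(2*r - 1) * (-1) \<le> (2*r - 1) * cos t"
    using c assms by (intro mult_left_mono) auto
  then have "1 + cos t \<le> (cmod u)^2"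
    unfolding nu using zero_le_square[of "r - 1"] by (simp add: algebra_simps power2_eq_square)
  then have sq: "sqrt (1 + cos t) \<le> cmod u"
    by (simp add: real_sqrt_le_iff real_le_lsqrt)
  have "\<bar>Psi a r t\<bar> \<le> cmod (complex_of_real r * cis t * u powr complex_of_real (-2*a))"
    unfolding Psi_def u_def by (rule abs_Im_le_cmod)
  also have "\<dots> = r * cmod u powr (-2*a)"
    using assms by (simp add: norm_mult norm_powr_real_powr')
  also have "\<dots> \<le> 1 * sqrt (1 + cos t) powr (-2*a)"
    using assms c sq by (intro mult_mono powr_mono2') auto
  also have "\<dots> = (1 + cos t) powr (-a)"
    using c by (simp add: powr_half_sqrt[symmetric] powr_powr)
  finally show ?thesis .
qed

text \<open>The integrable majorant used for dominated convergence, uniform in r.\<close>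
lemma Psi_sin_bound:
  assumes "0 \<le> a" "1/2 \<le> r" "r \<le> 1" "0 < t" "t < pi"
  shows "\<bar>Psi a r t * sin (real k * t)\<bar> \<le> real k * ((1 + cos t) powr (-a) * sin t)"
proof -
  have "\<bar>Psi a r t\<bar> * \<bar>sin (real k * t)\<bar> \<le> (1 + cos t) powr (-a) * (real k * sin t)"
    using assms by (intro mult_mono Psi_bound abs_sin_nat_mult_le) auto
  then show ?thesis by (simp add: abs_mult mult_ac)
qed

text \<open>On the open upper half circle, 1 + r e^(it) avoids the branch cut of powr.\<close>
lemma Psi_continuous:
  assumes "0 < r" "0 < t" "t < pi"
  shows "isCont (\<lambda>r. Psi a r t) r" and "isCont (\<lambda>t. Psi a r t) t"
proof -
  have "Im (1 + complex_of_real r * cis t) \<noteq> 0"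
    using assms sin_gt_zero[of t] by simp
  then have nonpos: "1 + complex_of_real r * cis t \<notin> \<real>\<^sub>\<le>\<^sub>0"
    using nonpos_Reals_subset_Reals complex_is_Real_iff by blast
  have "((\<lambda>r. of_real r * cis t * (1 + of_real r * cis t) powr of_real (-2*a))
      \<longlongrightarrow> of_real r * cis t * (1 + of_real r * cis t) powr of_real (-2*a)) (at r)"
    by (intro tendsto_intros tendsto_powr_complex' disjI1 nonpos)
  from tendsto_Im[OF this] show "isCont (\<lambda>r. Psi a r t) r"
    unfolding Psi_def isCont_def .
  have "((\<lambda>t. of_real r * cis t * (1 + of_real r * cis t) powr of_real (-2*a))
      \<longlongrightarrow> of_real r * cis t * (1 + of_real r * cis t) powr of_real (-2*a)) (at t)"
    by (intro tendsto_intros tendsto_powr_complex' disjI1 nonpos)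
  from tendsto_Im[OF this] show "isCont (\<lambda>t. Psi a r t) t"
    unfolding Psi_def isCont_def .
qed

lemma Psi_measurable:
  assumes "0 < r" "continuous_on {0<..<pi} g"
  shows "(\<lambda>t. indicator {0<..<pi} t * (Psi a r t * g t)) \<in> borel_measurable lborel"
proof -
  have "continuous_on {0<..<pi} (\<lambda>t. Psi a r t)"
    using Psi_continuous(2)[OF assms(1)] by (intro continuous_at_imp_continuous_on) auto
  then have "(\<lambda>t. indicator {0<..<pi} t *\<^sub>R (Psi a r t * g t)) \<in> borel_measurable borel"
    by (intro borel_measurable_continuous_on_indicator continuous_intros assms) auto
  then show ?thesis by simp
qed

text \<open>Closed form of the boundary values: 1 + e^(it) = 2 cos (t/2) e^(it/2).\<close>
lemma Psi_boundary:
  assumes "0 < t" "t < pi"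
  shows "Psi a 1 t = sin ((1 - a) * t) * (2 + 2 * cos t) powr (-a)"
proof -
  define c where "c = 2 * cos (t/2)"
  have c0: "0 < c" unfolding c_def using assms by (intro mult_pos_pos cos_gt_zero_pi) auto
  have ct: "cos t = 2 * (cos (t/2))^2 - 1" using cos_double_cos[of "t/2"] by simp
  have "1 + cis t = complex_of_real c * cis (t/2)"
    using sin_double[of "t/2"] by (simp add: complex_eq_iff c_def ct power2_eq_square)
  also have "\<dots> powr complex_of_real (-2*a)
      = complex_of_real c powr complex_of_real (-2*a) * cis (t/2) powr complex_of_real (-2*a)"
    by (rule powr_times_real_left) (use c0 in auto)
  also have "complex_of_real c powr complex_of_real (-2*a) = complex_of_real (c powr (-2*a))"
    by (rule powr_of_real) (use c0 in simp)
  also have "c powr (-2*a) = (c powr 2) powr (-a)"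
    by (simp add: powr_powr)
  also have "c powr 2 = 2 + 2 * cos t"
    using c0 by (simp add: c_def ct power2_eq_square)
  also have "cis (t/2) powr complex_of_real (-2*a) = cis (-a * t)"
    using assms by (simp add: powr_def Ln_cis cis_conv_exp algebra_simps)
  finally have "cis t * (1 + cis t) powr complex_of_real (-2*a)
      = complex_of_real ((2 + 2 * cos t) powr (-a)) * cis ((1 - a) * t)"
    by (simp add: cis_mult mult.left_commute algebra_simps)
  then show ?thesis
    unfolding Psi_def by simp
qed

text \<open>The majorant (1 + cos t)^(-a) sin t is integrable for a < 1, having the antiderivative
  -(1 + cos t)^(1-a)/(1-a).\<close>
lemma boundary_weight_integrable:
  assumes "a < 1"
  shows "set_integrable lborel {0<..<pi} (\<lambda>t. (1 + cos t) powr (-a) * sin t)"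
proof -
  define F where "F t = - ((1 + cos t) powr (1 - a)) / (1 - a)" for t
  have cos_ge: "0 \<le> 1 + cos t" for t :: real
    using cos_ge_minus_one[of t] by linarith
  have "set_integrable lborel (einterval (ereal 0) (ereal pi)) (\<lambda>t. (1 + cos t) powr (-a) * sin t)"
  proof (rule interval_integral_FTC_nonneg(1))
    fix x assume "ereal 0 < ereal x" "ereal x < ereal pi"
    then have pos: "0 < 1 + cos x"
      using cos_monotone_0_pi[of x pi] by simp
    have "(1 + cos x) powr (1 - a) = (1 + cos x) powr (-a) * (1 + cos x)"
      using powr_add[of "1 + cos x" "-a" 1] pos by simp
    then show "DERIV F x :> (1 + cos x) powr (-a) * sin x"
      unfolding F_def using pos assms by (auto intro!: derivative_eq_intros)
    show "isCont (\<lambda>t. (1 + cos t) powr (-a) * sin t) x"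
      using pos by (intro continuous_intros) auto
  next
    show "AE x in lborel. ereal 0 < ereal x \<longrightarrow> ereal x < ereal pi \<longrightarrow> 0 \<le> (1 + cos x) powr (-a) * sin x"
      by (intro AE_I2) (auto intro!: mult_nonneg_nonneg sin_ge_zero)
    show "((F \<circ> real_of_ereal) \<longlongrightarrow> F 0) (at_right (ereal 0))"
      unfolding ereal_tendsto_simps F_def using assms by (intro tendsto_intros) auto
    have "((\<lambda>t. 1 + cos t) \<longlongrightarrow> 1 + cos pi) (at_left pi)"
      by (intro tendsto_intros)
    then have "((\<lambda>t. (1 + cos t) powr (1 - a)) \<longlongrightarrow> 0) (at_left pi)"
      by (intro tendsto_zero_powrI[OF _ tendsto_const always_eventually]) (use cos_ge assms in auto)
    then have "(F \<longlongrightarrow> - 0 / (1 - a)) (at_left pi)"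
      unfolding F_def using assms by (intro tendsto_intros) auto
    then show "((F \<circ> real_of_ereal) \<longlongrightarrow> 0) (at_left (ereal pi))"
      unfolding ereal_tendsto_simps by simp
  qed simp
  then show ?thesis by (simp add: einterval_eq_Icc)
qed

lemma Psi_radial_limit:
  assumes "0 \<le> a" "a < 1"
    and r_bounds: "\<And>j. 1/2 \<le> r j" "\<And>j. r j \<le> 1" and r_lim: "r \<longlonglongrightarrow> 1"
  shows "set_integrable lborel {0<..<pi} (\<lambda>t. Psi a 1 t * sin (real k * t))"
    and "(\<lambda>j. LINT t:{0<..<pi}|lborel. Psi a (r j) t * sin (real k * t))
           \<longlonglongrightarrow> (LINT t:{0<..<pi}|lborel. Psi a 1 t * sin (real k * t))"
proof -
  define S where "S = {0<..<pi::real}"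
  define s where "s j t = indicator S t * (Psi a (r j) t * sin (real k * t))" for j t
  define f where "f t = indicator S t * (Psi a 1 t * sin (real k * t))" for t
  define w where "w t = real k * (indicator S t * ((1 + cos t) powr (-a) * sin t))" for t
  have sin_cont: "continuous_on {0<..<pi} (\<lambda>t. sin (real k * t))"
    by (intro continuous_intros)
  have f_meas: "f \<in> borel_measurable lborel"
    unfolding f_def[abs_def] S_def by (rule Psi_measurable[OF _ sin_cont]) simp
  have s_meas: "s j \<in> borel_measurable lborel" for j
    unfolding s_def[abs_def] S_def by (rule Psi_measurable[OF _ sin_cont]) (use r_bounds(1)[of j] in linarith)
  have w_int: "integrable lborel w"
    unfolding w_def[abs_def] S_def using boundary_weight_integrable[OF assms(2)]
    by (intro integrable_mult_right) (simp add: set_integrable_def)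
  have lim: "AE t in lborel. (\<lambda>j. s j t) \<longlonglongrightarrow> f t"
  proof (rule AE_I2)
    fix t
    show "(\<lambda>j. s j t) \<longlonglongrightarrow> f t"
    proof (cases "t \<in> S")
      case True
      then have "(\<lambda>j. Psi a (r j) t) \<longlonglongrightarrow> Psi a 1 t"
        by (intro isCont_tendsto_compose[OF Psi_continuous(1) r_lim]) (auto simp: S_def)
      then show ?thesis unfolding s_def f_def by (intro tendsto_intros)
    qed (simp add: s_def f_def)
  qed
  have bound: "AE t in lborel. norm (s j t) \<le> w t" for j
    using Psi_sin_bound[of a "r j" _ k] assms r_bounds(1,2)[of j]
    by (intro AE_I2) (auto simp: s_def w_def S_def indicator_def)
  have "integrable lborel f"
    by (rule integrable_dominated_convergence[OF f_meas s_meas w_int lim bound])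
  then show "set_integrable lborel {0<..<pi} (\<lambda>t. Psi a 1 t * sin (real k * t))"
    by (simp add: f_def[abs_def] S_def set_integrable_def)
  have "(\<lambda>j. integral\<^sup>L lborel (s j)) \<longlonglongrightarrow> integral\<^sup>L lborel f"
    by (rule integral_dominated_convergence[OF f_meas s_meas w_int lim bound])
  then show "(\<lambda>j. LINT t:{0<..<pi}|lborel. Psi a (r j) t * sin (real k * t))
      \<longlonglongrightarrow> (LINT t:{0<..<pi}|lborel. Psi a 1 t * sin (real k * t))"
    by (simp add: s_def[abs_def] f_def[abs_def] S_def set_lebesgue_integral_def)
qed

lemma Psi_boundary_sine_coefficient:
  assumes "0 < a" "a < 1" "k \<ge> 1"
  shows "set_integrable lborel {0<..<pi} (\<lambda>t. Psi a 1 t * sin (real k * t))"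
    and "(LINT t:{0<..<pi}|lborel. Psi a 1 t * sin (real k * t)) = ((-2*a) gchoose (k-1)) * pi/2"
proof -
  define C where "C = ((-2*a) gchoose (k-1)) * pi/2"
  define r where "r j = 1 - inverse (real (Suc (Suc j)))" for j
  have r_bounds: "1/2 \<le> r j" "r j < 1" for j
    by (auto simp: r_def field_simps)
  have r_lim: "r \<longlonglongrightarrow> 1"
    using tendsto_diff[OF tendsto_const[of 1] LIMSEQ_Suc[OF LIMSEQ_inverse_real_of_nat]]
    by (simp add: r_def[abs_def])
  note radial = Psi_radial_limit[of a r, OF less_imp_le[OF assms(1)] assms(2) r_bounds(1) less_imp_le[OF r_bounds(2)] r_lim]
  show "set_integrable lborel {0<..<pi} (\<lambda>t. Psi a 1 t * sin (real k * t))"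
    by (rule radial(1))
  have coeff: "(LINT t:{0<..<pi}|lborel. Psi a (r j) t * sin (real k * t)) = C * r j ^ k" for j
    using Psi_sine_coefficient[of "r j" k a] r_bounds[of j] assms by (simp add: C_def)
  have "(\<lambda>j. C * r j ^ k) \<longlonglongrightarrow> C * 1 ^ k"
    by (intro tendsto_intros r_lim)
  then have "(\<lambda>j. LINT t:{0<..<pi}|lborel. Psi a (r j) t * sin (real k * t)) \<longlonglongrightarrow> C"
    by (simp add: coeff)
  from LIMSEQ_unique[OF radial(2) this]
  show "(LINT t:{0<..<pi}|lborel. Psi a 1 t * sin (real k * t)) = ((-2*a) gchoose (k-1)) * pi/2"
    by (simp only: C_def)
qed

text \<open>Sine expansion of the Poisson-type kernel, from the geometric series in -w e^(it).\<close>
lemma poisson_sine_series: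
  assumes "0 < w" "w < 1"
  shows "(\<lambda>k. -2 * (-w)^Suc k * sin (real (Suc k) * t)) sums (2 * w * sin t / (1 + 2*w*cos t + w^2))"
proof -
  define z where "z = complex_of_real (-w) * cis t"
  have "norm z < 1" using assms by (simp add: z_def norm_mult)
  from sums_Im[OF sums_mult[OF geometric_sums[OF this], of z]]
  have geom: "(\<lambda>k. Im (z * z^k)) sums Im (z / (1 - z))" by simp
  have power_term: "Im (z * z^k) = (-w)^Suc k * sin (real (Suc k) * t)" for k
  proof -
    have "z * z^k = complex_of_real ((-w)^Suc k) * cis t ^ Suc k"
      unfolding z_def power_Suc[symmetric] by (simp only: power_mult_distrib of_real_power)
    then show ?thesis by (simp only: Complex.DeMoivre) simp
  qed
  have "(Re (1 - z))\<^sup>2 + (Im (1 - z))\<^sup>2 = (1 + w * cos t)^2 + (w * sin t)^2"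
    by (simp add: z_def)
  also have "\<dots> = 1 + 2*w*cos t + w^2"
    by (simp add: power_mult_distrib sin_squared_eq) (simp add: power2_eq_square algebra_simps)
  finally have den: "(Re (1 - z))\<^sup>2 + (Im (1 - z))\<^sup>2 = 1 + 2*w*cos t + w^2" .
  have num: "Im z * Re (1 - z) - Re z * Im (1 - z) = - w * sin t"
    by (simp add: z_def algebra_simps)
  have "Im (z / (1 - z)) = - w * sin t / (1 + 2*w*cos t + w^2)"
    by (simp only: Im_divide num den)
  with sums_mult[OF geom, of "-2"] show ?thesis
    unfolding power_term by (simp add: mult.assoc)
qed

text \<open>Integral of the boundary function against the kernel: expand the kernel, integrate termwise
  with the sine coefficients above and sum the binomial series in -w.\<close>
lemma Psi_poisson_integral:
  assumes "0 < a" "a < 1" "0 < w" "w < 1"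
  shows "set_integrable lborel {0<..<pi} (\<lambda>t. Psi a 1 t * (2 * w * sin t / (1 + 2 * w * cos t + w^2)))"
    and "(LINT t:{0<..<pi}|lborel. Psi a 1 t * (2 * w * sin t / (1 + 2 * w * cos t + w^2)))
           = pi * w * (1 - w) powr (-2*a)"
proof -
  define S where "S = {0<..<pi::real}"
  define f where "f k t = indicator S t * (Psi a 1 t * (-2 * (-w)^Suc k * sin (real (Suc k) * t)))" for k t
  define D where "D t = indicator S t * ((1 + cos t) powr (-a) * sin t)" for t
  define c where "c k = 2 * w^Suc k * real (Suc k)" for k
  define F where "F t = indicator S t * (Psi a 1 t * (2 * w * sin t / (1 + 2 * w * cos t + w^2)))" for t
  have f_eq: "f k = (\<lambda>t. (-2 * (-w)^Suc k) * (indicator S t * (Psi a 1 t * sin (real (Suc k) * t))))" for k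
    by (simp add: fun_eq_iff f_def mult_ac)
  have int: "integrable lborel (f k)" for k
    using Psi_boundary_sine_coefficient(1)[OF assms(1,2), of "Suc k"]
    unfolding f_eq by (intro integrable_mult_right) (simp add: S_def set_integrable_def)
  have dom: "integrable lborel D"
    using boundary_weight_integrable[OF assms(2)] by (simp add: D_def[abs_def] S_def set_integrable_def)
  have "summable (\<lambda>k. 2 * (w^Suc k * real (Suc k)))"
    using geometric_sums_times_n[of w] assms summable_Suc_iff[of "\<lambda>n. w^n * real n"]
    by (intro summable_mult) (auto simp: sums_iff)
  then have coeff: "summable c"
    by (simp add: c_def[abs_def] mult.assoc)
  have bound: "norm (f k t) \<le> c k * D t" for k t
  proof (cases "t \<in> S")
    case True
    have "\<bar>Psi a 1 t * sin (real (Suc k) * t)\<bar> \<le> real (Suc k) * ((1 + cos t) powr (-a) * sin t)"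
      using assms True by (intro Psi_sin_bound) (auto simp: S_def)
    then have "2 * w^Suc k * \<bar>Psi a 1 t * sin (real (Suc k) * t)\<bar> \<le> c k * ((1 + cos t) powr (-a) * sin t)"
      using assms by (auto simp: c_def intro: order_trans[OF mult_left_mono])
    then show ?thesis
      using True assms by (simp add: f_eq D_def abs_mult power_abs mult_ac)
  qed (simp add: f_def D_def)
  have lim: "(\<lambda>k. f k t) sums F t" for t
    unfolding f_def F_def by (intro sums_mult poisson_sine_series assms)
  have "integral\<^sup>L lborel (f k) = pi * w * (((-2*a) gchoose k) * (-w)^k)" for k
    using Psi_boundary_sine_coefficient(2)[OF assms(1,2), of "Suc k"]
    unfolding f_eq by (simp add: S_def set_lebesgue_integral_def) (metis mult.commute)
  moreover have "(\<lambda>k. pi * w * (((-2*a) gchoose k) * (-w)^k)) sums (pi * w * (1 - w) powr (-2*a))"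
    using gen_binomial_real[of "-w" "-2*a"] assms by (intro sums_mult) simp
  ultimately have "(\<lambda>k. integral\<^sup>L lborel (f k)) sums (pi * w * (1 - w) powr (-2*a))"
    by simp
  with sums_integral_dominated[OF int dom coeff bound lim] sums_unique2
  show "set_integrable lborel {0<..<pi} (\<lambda>t. Psi a 1 t * (2 * w * sin t / (1 + 2 * w * cos t + w^2)))"
    and "(LINT t:{0<..<pi}|lborel. Psi a 1 t * (2 * w * sin t / (1 + 2 * w * cos t + w^2)))
           = pi * w * (1 - w) powr (-2*a)"
    by (auto simp: F_def[abs_def] S_def set_integrable_def set_lebesgue_integral_def)
qed

lemma nn_integral_cos_substitution:
  fixes g :: "real \<Rightarrow> real"
  assumes g_meas: "g \<in> borel_measurable borel" and g_zero: "\<And>x. x \<notin> {-2<..<2} \<Longrightarrow> g x = 0"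
  shows "(\<integral>\<^sup>+x. ennreal (g x) \<partial>lborel)
       = (\<integral>\<^sup>+t. ennreal (g (-2 * cos t) * (2 * sin t)) * indicator {0<..<pi} t \<partial>lborel)"
proof -
  have "(\<integral>\<^sup>+x. ennreal (g x) \<partial>lborel) = (\<integral>\<^sup>+x. ennreal (g x * indicator {-2 * cos 0..-2 * cos pi} x) \<partial>lborel)"
    by (intro nn_integral_cong) (auto simp: indicator_def g_zero)
  also have "\<dots> = (\<integral>\<^sup>+t. ennreal (g (-2 * cos t) * (2 * sin t) * indicator {0..pi} t) \<partial>lborel)"
  proof (rule nn_integral_substitution[where g="\<lambda>t. -2 * cos t" and g'="\<lambda>t. 2 * sin t"])
    show "set_borel_measurable borel {-2 * cos 0..-2 * cos pi} g"
      unfolding set_borel_measurable_def using g_meas by measurable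
    show "((\<lambda>t. -2 * cos t) has_real_derivative 2 * sin x) (at x)" for x
      by (auto intro!: derivative_eq_intros)
    show "x \<in> {0..pi} \<Longrightarrow> 0 \<le> 2 * sin x" for x
      by (auto intro!: sin_ge_zero)
    show "continuous_on {0..pi} (\<lambda>t. 2 * sin t)"
      by (intro continuous_intros)
  qed simp
  also have "\<dots> = (\<integral>\<^sup>+t. ennreal (g (-2 * cos t) * (2 * sin t)) * indicator {0<..<pi} t \<partial>lborel)"
    using g_zero[of "-2"] g_zero[of 2]
    by (intro nn_integral_cong) (auto simp: indicator_def)
  finally show ?thesis .
qed

lemma integral_cos_substitution:
  fixes g h :: "real \<Rightarrow> real"
  assumes g_meas: "g \<in> borel_measurable borel" and g_nonneg: "\<And>x. 0 \<le> g x"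
    and g_zero: "\<And>x. x \<notin> {-2<..<2} \<Longrightarrow> g x = 0"
    and gh: "\<And>t. 0 < t \<Longrightarrow> t < pi \<Longrightarrow> g (-2 * cos t) * (2 * sin t) = h t"
    and h_int: "set_integrable lborel {0<..<pi} h"
    and h_val: "(LINT t:{0<..<pi}|lborel. h t) = v"
  shows "integrable lborel g \<and> integral\<^sup>L lborel g = v"
proof -
  have h_nonneg: "0 \<le> indicator {0<..<pi} t * h t" for t
  proof (cases "t \<in> {0<..<pi}")
    case True
    then have "h t = g (-2 * cos t) * (2 * sin t)"
      using gh by simp
    moreover have "0 \<le> g (-2 * cos t) * (2 * sin t)"
      using True g_nonneg sin_ge_zero[of t] by (auto intro!: mult_nonneg_nonneg)
    ultimately show ?thesis using True by simp
  qed simp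
  have "(\<integral>\<^sup>+x. ennreal (g x) \<partial>lborel)
      = (\<integral>\<^sup>+t. ennreal (g (-2 * cos t) * (2 * sin t)) * indicator {0<..<pi} t \<partial>lborel)"
    by (rule nn_integral_cos_substitution[OF g_meas g_zero])
  also have "\<dots> = (\<integral>\<^sup>+t. ennreal (indicator {0<..<pi} t * h t) \<partial>lborel)"
    using gh by (intro nn_integral_cong) (auto simp: indicator_def)
  also have "\<dots> = ennreal v"
    using h_int h_nonneg h_val
    by (subst nn_integral_eq_integral) (auto simp: set_integrable_def set_lebesgue_integral_def)
  finally have nn: "(\<integral>\<^sup>+x. ennreal (g x) \<partial>lborel) = ennreal v" .
  have "0 \<le> v"
    using h_val h_nonneg by (auto simp: set_lebesgue_integral_def intro!: integral_nonneg_AE)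
  with nn_integral_eq_integrable[of g lborel v] g_meas g_nonneg nn show ?thesis
    by auto
qed

lemma wignerG_bounds:
  assumes "z > 2"
  shows "0 < wignerG z" "wignerG z < 1" "z = wignerG z + 1 / wignerG z"
proof -
  define s where "s = sqrt (z^2 - 4)"
  have s_sq: "s^2 = z^2 - 4"
    using assms power_strict_mono[of 2 z 2] by (simp add: s_def)
  have "sqrt (z^2 - 4) < sqrt (z^2)"
    by (rule real_sqrt_less_mono) simp
  then have s_less: "s < z"
    using assms by (simp add: s_def)
  then show "0 < wignerG z"
    by (simp add: wignerG_def s_def[symmetric])
  have "z - 2 < s"
    unfolding s_def by (rule real_less_rsqrt) (use assms in \<open>simp add: power2_eq_square algebra_simps\<close>)
  then show "wignerG z < 1"
    by (simp add: wignerG_def s_def[symmetric])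
  have "(z - s) / 2 * ((z - s) / 2) - z * ((z - s) / 2) + 1 = 0"
    using s_sq by (simp add: field_simps power2_eq_square)
  then show "z = wignerG z + 1 / wignerG z"
    using s_less by (simp add: wignerG_def s_def[symmetric] field_simps)
qed

text \<open>In the angle variable the Cauchy kernel becomes the Poisson-type kernel in w = G(z).\<close>
lemma wignerG_kernel:
  assumes "z > 2"
  shows "2 * sin t / (z + 2 * cos t)
       = 2 * wignerG z * sin t / (1 + 2 * wignerG z * cos t + (wignerG z)^2)"
proof -
  define w where "w = wignerG z"
  note w = wignerG_bounds[OF assms, folded w_def]
  have "- (2 * w) \<le> 2 * w * cos t"
    using mult_left_mono[of "-1" "cos t" "2*w"] w by simp
  moreover have "0 < (1 - w)^2"
    using w by simp
  ultimately have pos: "0 < 1 + 2 * w * cos t + w^2"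
    by (simp add: power2_eq_square algebra_simps)
  have z_eq: "z + 2 * cos t = (1 + 2 * w * cos t + w^2) / w"
    using w by (simp add: field_simps power2_eq_square)
  show ?thesis
    unfolding w_def[symmetric] z_eq using pos w by (simp add: field_simps)
qed

text \<open>Since z - 2 = (1 - w)^2 / w, the value w (1-w)^(-2a) is the claimed transform.\<close>
lemma wignerG_powr:
  assumes "z > 2"
  shows "wignerG z * (1 - wignerG z) powr (-2*a) = wignerG z powr (1 - a) / (z - 2) powr a"
proof -
  define w where "w = wignerG z"
  note w = wignerG_bounds[OF assms, folded w_def]
  have "z - 2 = (1 - w) powr 2 / w"
    using w by (simp add: field_simps power2_eq_square)
  moreover have "((1 - w) powr 2) powr a = (1 - w) powr (2 * a)"
    by (simp add: powr_powr)
  ultimately have z_powr: "(z - 2) powr a = (1 - w) powr (2 * a) / w powr a"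
    using w by (simp add: powr_divide)
  have w_powr: "w powr (1 - a) = w / w powr a"
    using w by (simp add: powr_diff)
  have minus_powr: "(1 - w) powr (-2*a) = 1 / (1 - w) powr (2*a)"
    using powr_minus_divide[of "1 - w" "2*a"] by simp
  have "0 < w powr a" "0 < (1 - w) powr (2*a)"
    using w by auto
  then show ?thesis
    unfolding w_def[symmetric] z_powr w_powr minus_powr by (simp add: field_simps)
qed

text \<open>The angle (1 - 1/(2 lam)) (arcsin (x/2) + pi/2) lies in [0,pi], so the density is nonnegative.\<close>
lemma nu_dens_nonneg:
  assumes "lam > 1/2"
  shows "0 \<le> nu_dens lam x"
proof (cases "x \<in> {-2<..<2}")
  case True
  define \<theta> where "\<theta> = arcsin (x / 2) + pi / 2"
  have \<theta>: "0 < \<theta>" "\<theta> < pi"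
    using arcsin_lt_bounded[of "x/2"] True by (auto simp: \<theta>_def)
  have a: "0 < 1 / (2 * lam)" "1 / (2 * lam) < 1"
    using assms by (auto simp: field_simps)
  have le: "(1 - 1 / (2 * lam)) * \<theta> \<le> \<theta>"
    using a \<theta> by (simp add: mult_left_le_one_le)
  have "0 \<le> (1 - 1 / (2 * lam)) * \<theta>"
    using a \<theta> by simp
  moreover have "(1 - 1 / (2 * lam)) * \<theta> \<le> pi"
    using le \<theta> by linarith
  ultimately have "0 \<le> sin ((1 - 1 / (2 * lam)) * \<theta>)"
    by (rule sin_ge_zero)
  then show ?thesis
    using True by (simp add: nu_dens_def \<theta>_def)
qed (auto simp: nu_dens_def)

lemma nu_dens_measurable [measurable]: "nu_dens lam \<in> borel_measurable borel"
proof -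
  define h where "h x = sin ((1 - 1 / (2 * lam)) * (arcsin (x / 2) + pi / 2)) * (2 - x) powr (- 1 / (2 * lam))" for x
  have "(\<lambda>x. indicator {-2<..<2} x *\<^sub>R h x) \<in> borel_measurable borel"
    unfolding h_def by (intro borel_measurable_continuous_on_indicator continuous_intros continuous_on_arcsin) auto
  moreover have "nu_dens lam = (\<lambda>x. indicator {-2<..<2} x *\<^sub>R h x)"
    by (simp add: fun_eq_iff nu_dens_def h_def indicator_def)
  ultimately show ?thesis by simp
qed

lemma nu_dens_angle:
  assumes "lam > 1/2" "0 < t" "t < pi"
  shows "nu_dens lam (-2 * cos t) = Psi (1 / (2 * lam)) 1 t"
proof -
  have cos_bounds: "-1 < cos t" "cos t < 1"
    using cos_monotone_0_pi[of t pi] cos_monotone_0_pi[of 0 t] assms by auto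
  have "arcsin (cos t) = pi/2 - t"
    using arcsin_sin[of "pi/2 - t"] assms by (simp add: sin_cos_eq)
  then have "arcsin (-2 * cos t / 2) + pi / 2 = t"
    using arcsin_minus[of "cos t"] cos_bounds by simp
  then show ?thesis
    using cos_bounds Psi_boundary[OF assms(2,3)] by (simp add: nu_dens_def)
qed

text \<open>Total mass pi: the first sine coefficient of Psi a 1 is pi/2.\<close>
lemma nu_dens_integral:
  assumes "lam > 1/2"
  shows "integrable lborel (nu_dens lam) \<and> integral\<^sup>L lborel (nu_dens lam) = pi"
proof (rule integral_cos_substitution[OF nu_dens_measurable nu_dens_nonneg[OF assms]])
  define a where "a = 1 / (2 * lam)"
  have a: "0 < a" "a < 1"
    using assms by (auto simp: a_def field_simps)
  show "nu_dens lam x = 0" if "x \<notin> {-2<..<2}" for x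
    using that by (auto simp: nu_dens_def)
  show "nu_dens lam (-2 * cos t) * (2 * sin t) = 2 * (Psi a 1 t * sin (real 1 * t))" if "0 < t" "t < pi" for t
    using nu_dens_angle[OF assms that] by (simp add: a_def)
  show "set_integrable lborel {0<..<pi} (\<lambda>t. 2 * (Psi a 1 t * sin (real 1 * t)))"
    using Psi_boundary_sine_coefficient(1)[OF a, of 1] by (intro set_integrable_mult_right) auto
  show "(LINT t:{0<..<pi}|lborel. 2 * (Psi a 1 t * sin (real 1 * t))) = pi"
    using Psi_boundary_sine_coefficient(2)[OF a, of 1] by (simp add: set_integral_mult_right)
qed

lemma nu_dens_cauchy_integral:
  assumes "lam > 1/2" "z > 2"
  shows "integrable lborel (\<lambda>x. nu_dens lam x / (z - x))
    \<and> (\<integral>x. nu_dens lam x / (z - x) \<partial>lborel)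
        = pi * (wignerG z powr (1 - 1 / (2 * lam)) / (z - 2) powr (1 / (2 * lam)))"
proof (rule integral_cos_substitution)
  define a where "a = 1 / (2 * lam)"
  define w where "w = wignerG z"
  have a: "0 < a" "a < 1"
    using assms by (auto simp: a_def field_simps)
  have w: "0 < w" "w < 1"
    using wignerG_bounds[OF assms(2)] by (auto simp: w_def)
  show "(\<lambda>x. nu_dens lam x / (z - x)) \<in> borel_measurable borel"
    using nu_dens_measurable by measurable
  show "0 \<le> nu_dens lam x / (z - x)" for x
    using nu_dens_nonneg[OF assms(1), of x] assms(2) by (cases "x < 2") (auto simp: nu_dens_def)
  show "nu_dens lam x / (z - x) = 0" if "x \<notin> {-2<..<2}" for x
    using that by (auto simp: nu_dens_def)
  show "nu_dens lam (-2 * cos t) / (z - -2 * cos t) * (2 * sin t)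
      = Psi a 1 t * (2 * w * sin t / (1 + 2 * w * cos t + w^2))" if "0 < t" "t < pi" for t
  proof -
    have "nu_dens lam (-2 * cos t) / (z - -2 * cos t) * (2 * sin t)
        = nu_dens lam (-2 * cos t) * (2 * sin t / (z + 2 * cos t))"
      by simp
    then show ?thesis
      by (simp only: nu_dens_angle[OF assms(1) that] wignerG_kernel[OF assms(2)] a_def w_def)
  qed
  show "set_integrable lborel {0<..<pi} (\<lambda>t. Psi a 1 t * (2 * w * sin t / (1 + 2 * w * cos t + w^2)))"
    by (rule Psi_poisson_integral(1)[OF a w])
  show "(LINT t:{0<..<pi}|lborel. Psi a 1 t * (2 * w * sin t / (1 + 2 * w * cos t + w^2)))
      = pi * (wignerG z powr (1 - 1 / (2 * lam)) / (z - 2) powr (1 / (2 * lam)))"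
    using Psi_poisson_integral(2)[OF a w] wignerG_powr[OF assms(2), of a]
    by (simp add: a_def w_def mult.assoc)
qed

definition nu_measure :: "real \<Rightarrow> real measure" where
  "nu_measure lam = density lborel (\<lambda>x. ennreal (1 / pi * nu_dens lam x))"

lemma prob_space_nu_measure:
  assumes "lam > 1/2"
  shows "prob_space (nu_measure lam)"
proof (rule prob_spaceI)
  have "emeasure (nu_measure lam) (space (nu_measure lam)) = (\<integral>\<^sup>+x. ennreal (1 / pi * nu_dens lam x) \<partial>lborel)"
    unfolding nu_measure_def by (subst emeasure_density) auto
  also have "\<dots> = ennreal (\<integral>x. 1 / pi * nu_dens lam x \<partial>lborel)"
    using nu_dens_integral[OF assms] nu_dens_nonneg[OF assms]
    by (intro nn_integral_eq_integral) auto
  also have "\<dots> = 1"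
    using nu_dens_integral[OF assms] by simp
  finally show "emeasure (nu_measure lam) (space (nu_measure lam)) = 1" .
qed

lemma nu_measure_support: "measure (nu_measure lam) (UNIV - {-2..2}) = 0"
proof -
  have "emeasure (nu_measure lam) (UNIV - {-2..2})
      = (\<integral>\<^sup>+x. ennreal (1 / pi * nu_dens lam x) * indicator (UNIV - {-2..2}) x \<partial>lborel)"
    unfolding nu_measure_def by (subst emeasure_density) auto
  also have "(\<lambda>x. ennreal (1 / pi * nu_dens lam x) * indicator (UNIV - {-2..2}) x) = (\<lambda>x. 0)"
    by (auto simp: fun_eq_iff indicator_def nu_dens_def)
  finally show ?thesis
    by (simp add: measure_def)
qed

lemma nu_measure_cauchy_transform:
  assumes "lam > 1/2" "z > 2"
  shows "integrable (nu_measure lam) (\<lambda>x. 1 / (z - x))"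
    and "(\<integral>x. 1 / (z - x) \<partial>nu_measure lam)
        = wignerG z powr (1 - 1 / (2 * lam)) / (z - 2) powr (1 / (2 * lam))"
proof -
  have weighted: "(\<lambda>x. (1 / pi * nu_dens lam x) *\<^sub>R (1 / (z - x))) = (\<lambda>x. 1 / pi * (nu_dens lam x / (z - x)))"
    by (simp add: fun_eq_iff)
  have "integrable lborel (\<lambda>x. (1 / pi * nu_dens lam x) *\<^sub>R (1 / (z - x)))"
    unfolding weighted using nu_dens_cauchy_integral[OF assms] by (intro integrable_mult_right) simp
  then show "integrable (nu_measure lam) (\<lambda>x. 1 / (z - x))"
    unfolding nu_measure_def using nu_dens_nonneg[OF assms(1)]
    by (subst integrable_density) auto
  have "(\<integral>x. 1 / (z - x) \<partial>nu_measure lam) = (\<integral>x. (1 / pi * nu_dens lam x) *\<^sub>R (1 / (z - x)) \<partial>lborel)"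
    unfolding nu_measure_def using nu_dens_nonneg[OF assms(1)]
    by (intro integral_density) auto
  also have "\<dots> = 1 / pi * (\<integral>x. nu_dens lam x / (z - x) \<partial>lborel)"
    unfolding weighted by (rule integral_mult_right_zero)
  finally show "(\<integral>x. 1 / (z - x) \<partial>nu_measure lam)
      = wignerG z powr (1 - 1 / (2 * lam)) / (z - 2) powr (1 / (2 * lam))"
    using nu_dens_cauchy_integral[OF assms] by simp
qed

theorem mainTheorem5:
  fixes lam :: real
  assumes "lam > 1/2"
  shows "\<exists>(\<nu> :: real measure) (c :: real).
           prob_space \<nu> \<and> sets \<nu> = sets borel \<and>
           measure \<nu> (UNIV - {-2..2}) = 0 \<and>
           (\<forall>z::real. z > 2 \<longrightarrow>
              integrable \<nu> (\<lambda>x. 1 / (z - x)) \<and>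
              (\<integral>x. 1 / (z - x) \<partial>\<nu>) =
                wignerG z powr (1 - 1 / (2 * lam)) / (z - 2) powr (1 / (2 * lam))) \<and>
           c > 0 \<and>
           \<nu> = density lborel (\<lambda>x. ennreal (c * nu_dens lam x))"
proof (intro exI[of _ "nu_measure lam"] exI[of _ "1 / pi"] conjI allI impI)
  show "prob_space (nu_measure lam)"
    using prob_space_nu_measure[OF assms] .
  show "sets (nu_measure lam) = sets borel"
    by (simp add: nu_measure_def)
  show "measure (nu_measure lam) (UNIV - {-2..2}) = 0"
    by (rule nu_measure_support)
  fix z :: real assume "z > 2"
  then show "integrable (nu_measure lam) (\<lambda>x. 1 / (z - x))"
    and "(\<integral>x. 1 / (z - x) \<partial>nu_measure lam)
        = wignerG z powr (1 - 1 / (2 * lam)) / (z - 2) powr (1 / (2 * lam))"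
    using nu_measure_cauchy_transform[OF assms] by auto
qed (simp_all add: nu_measure_def)

end
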